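(* Let $\delta\in\mathbb R$ and $\nu\in[0,\pi)$, and consider the equation $\mathcal P(\sigma;\delta,\nu)=0$ for $\sigma\in[0,2\pi)$. If $(\delta,\nu)\in\Omega_+$, this equation has exactly four distinct roots in $[0,2\pi)$. If $(\delta,\nu)\in\Omega_-$, it has exactly two distinct roots in $[0,2\pi)$. Moreover, if $(\delta,\nu)\notin\gamma_+\cup\gamma_-$, then every root $\sigma$ satisfies $\mathcal P'(\sigma;\delta,\nu)\neq 0$. Finally, if $\sigma$ is a root with $\mathcal P'(\sigma;\delta,\nu)=\mathcal P''(\sigma;\delta,\nu)=0$, then $\nu=0$, $\sin\sigma=0$ and $\mathcal P'''(\sigma;\delta,\nu)=-3\cos\sigma\neq0$.
   Context: $\mathcal P(\sigma;\delta,\nu):=\delta\sin(2\sigma+\nu)-\sin\sigma$; primes on $\mathcal P$ denote derivatives with respect to $\sigma$. Let $\gamma(\delta,\nu):=(4\delta^2-1)^3-27\delta^2\sin^2\nu$. Define $\Omega_\pm:=\{(\delta,\nu)\in\mathbb R\times[0,\pi):\pm\gamma(\delta,\nu)>0\}$ and $\gamma_\pm:=\{(\delta,\nu)\in\mathbb R\times[0,\pi):\gamma(\delta,\nu)=0,\ \pm\delta>0\}$. *)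

theory Defs
  imports "HOL-Analysis.Analysis"
begin

definition PP :: "real \<Rightarrow> real \<Rightarrow> real \<Rightarrow> real" where
  "PP \<sigma> \<delta> \<nu> = \<delta> * sin (2 * \<sigma> + \<nu>) - sin \<sigma>"

definition PPd :: "nat \<Rightarrow> real \<Rightarrow> real \<Rightarrow> real \<Rightarrow> real" where
  "PPd k \<sigma> \<delta> \<nu> = (deriv ^^ k) (\<lambda>s. PP s \<delta> \<nu>) \<sigma>"

definition gam :: "real \<Rightarrow> real \<Rightarrow> real" where
  "gam \<delta> \<nu> = (4 * \<delta>^2 - 1)^3 - 27 * \<delta>^2 * (sin \<nu>)^2"

definition Omega_plus :: "(real \<times> real) set" where
  "Omega_plus = {(\<delta>, \<nu>). 0 \<le> \<nu> \<and> \<nu> < pi \<and> gam \<delta> \<nu> > 0}"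

definition Omega_minus :: "(real \<times> real) set" where
  "Omega_minus = {(\<delta>, \<nu>). 0 \<le> \<nu> \<and> \<nu> < pi \<and> gam \<delta> \<nu> < 0}"

definition gamma_plus :: "(real \<times> real) set" where
  "gamma_plus = {(\<delta>, \<nu>). 0 \<le> \<nu> \<and> \<nu> < pi \<and> gam \<delta> \<nu> = 0 \<and> \<delta> > 0}"

definition gamma_minus :: "(real \<times> real) set" where
  "gamma_minus = {(\<delta>, \<nu>). 0 \<le> \<nu> \<and> \<nu> < pi \<and> gam \<delta> \<nu> = 0 \<and> \<delta> < 0}"

end

theory Submission
  imports Defs "HOL-Library.Quadratic_Discriminant"
begin

text \<open>
  With \<open>\<theta> = \<pi>/4 - \<nu>/2\<close>, \<open>a = sin \<theta>\<close> and \<open>b = cos \<theta> > 0\<close>, rotating \<open>\<sigma>\<close> by \<open>\<theta>\<close> gives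
  \<open>P = \<delta>(2X^2 - 1) - aX - bY\<close> for the point \<open>(X, Y) = (cos (\<sigma> - \<theta>), sin (\<sigma> - \<theta>))\<close> of the
  unit circle. Hence the roots in \<open>[0, 2\<pi>)\<close> correspond bijectively to the real roots of the
  quartic \<open>(\<delta>(2X^2 - 1) - aX)^2 = b^2 (1 - X^2)\<close>. This quartic is nonnegative at \<open>\<plusminus>1\<close> and
  negative at a zero of \<open>\<delta>(2X^2 - 1) - aX\<close> inside \<open>(-1, 1)\<close>, so it has two real roots, and its
  discriminant is \<open>64 \<delta>^2 b^4 \<gamma>(\<delta>, \<nu>)\<close>. For a quartic with two distinct real roots the sign
  of the discriminant decides whether the other two roots are real and distinct or non-real.
  The claims about multiple roots follow by eliminating the phase \<open>2\<sigma> + \<nu>\<close> from the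
  equations \<open>P = P' = 0\<close>, resp. \<open>P = P' = P'' = 0\<close>.
\<close>

definition quartic :: "real \<Rightarrow> real \<Rightarrow> real \<Rightarrow> real \<Rightarrow> real \<Rightarrow> real \<Rightarrow> real" where
  "quartic a b c d e X = a * X^4 + b * X^3 + c * X^2 + d * X + e"

definition disc4 :: "real \<Rightarrow> real \<Rightarrow> real \<Rightarrow> real \<Rightarrow> real \<Rightarrow> real" where
 "disc4 a b c d e = 256*a^3*e^3 - 192*a^2*b*d*e^2 - 128*a^2*c^2*e^2 + 144*a^2*c*d^2*e
    - 27*a^2*d^4 + 144*a*b^2*c*e^2 - 6*a*b^2*d^2*e - 80*a*b*c^2*d*e + 18*a*b*c*d^3 + 16*a*c^4*e
    - 4*a*c^3*d^2 - 27*b^4*e^2 + 18*b^3*c*d*e - 4*b^3*d^3 - 4*b^2*c^3*e + b^2*c^2*d^2"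

lemma disc4_factored:
  fixes a r1 r2 p q :: real
  shows "disc4 a (a*(p - (r1+r2))) (a*(q - (r1+r2)*p + r1*r2)) (a*(r1*r2*p - (r1+r2)*q)) (a*(r1*r2*q))
     = a^6 * (r1 - r2)^2 * (p^2 - 4*q) * ((r1^2 + p*r1 + q) * (r2^2 + p*r2 + q))^2"
  unfolding disc4_def by algebra

lemma quartic_factor_two_roots:
  fixes a b c d e r1 r2 :: real
  assumes "a \<noteq> 0" "r1 \<noteq> r2" "quartic a b c d e r1 = 0" "quartic a b c d e r2 = 0"
  obtains p q where "\<And>X. quartic a b c d e X = a * (X - r1) * (X - r2) * (X^2 + p*X + q)"
    and "disc4 a b c d e
      = a^6 * (r1 - r2)^2 * (p^2 - 4*q) * ((r1^2 + p*r1 + q) * (r2^2 + p*r2 + q))^2"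
proof -
  define p where "p = b/a + (r1 + r2)"
  define q where "q = c/a + (r1 + r2)*p - r1*r2"
  have b: "b = a*(p - (r1+r2))" and c: "c = a*(q - (r1+r2)*p + r1*r2)"
    using \<open>a \<noteq> 0\<close> unfolding p_def q_def by (simp_all add: field_simps)
  \<comment> \<open>the remainder modulo (X - r1)(X - r2) is linear and vanishes at both roots\<close>
  define \<alpha> where "\<alpha> = d - a*(r1*r2*p - (r1+r2)*q)"
  define \<beta> where "\<beta> = e - a*(r1*r2*q)"
  have rem: "quartic a b c d e X = a * (X - r1) * (X - r2) * (X^2 + p*X + q) + \<alpha>*X + \<beta>" for X
    unfolding quartic_def \<alpha>_def \<beta>_def b c by algebra
  have at_r1: "\<alpha>*r1 + \<beta> = 0" and at_r2: "\<alpha>*r2 + \<beta> = 0"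
    using rem[of r1] rem[of r2] assms(3,4) by simp_all
  then have "\<alpha> * (r1 - r2) = 0" by algebra
  then have "\<alpha> = 0" using \<open>r1 \<noteq> r2\<close> by simp
  moreover from this have "\<beta> = 0" using at_r1 by simp
  ultimately have d: "d = a*(r1*r2*p - (r1+r2)*q)" and e: "e = a*(r1*r2*q)"
    unfolding \<alpha>_def \<beta>_def by simp_all
  show thesis
  proof (rule that)
    show "quartic a b c d e X = a * (X - r1) * (X - r2) * (X^2 + p*X + q)" for X
      using rem \<open>\<alpha> = 0\<close> \<open>\<beta> = 0\<close> by simp
    show "disc4 a b c d e
      = a^6 * (r1 - r2)^2 * (p^2 - 4*q) * ((r1^2 + p*r1 + q) * (r2^2 + p*r2 + q))^2"
      unfolding b c d e by (rule disc4_factored)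
  qed
qed

lemma card_quartic_roots_by_disc:
  fixes a b c d e r1 r2 :: real
  assumes "a \<noteq> 0" "r1 \<noteq> r2" "quartic a b c d e r1 = 0" "quartic a b c d e r2 = 0"
  shows "disc4 a b c d e > 0 \<Longrightarrow> card {X. quartic a b c d e X = 0} = 4"
    and "disc4 a b c d e < 0 \<Longrightarrow> card {X. quartic a b c d e X = 0} = 2"
proof -
  obtain p q where factor: "\<And>X. quartic a b c d e X = a * (X - r1) * (X - r2) * (X^2 + p*X + q)"
    and disc: "disc4 a b c d e
      = a^6 * (r1 - r2)^2 * (p^2 - 4*q) * ((r1^2 + p*r1 + q) * (r2^2 + p*r2 + q))^2"
    using quartic_factor_two_roots[OF assms] by blast
  define Q where "Q X = X^2 + p*X + q" for X
  have roots: "{X. quartic a b c d e X = 0} = {r1, r2} \<union> {X. Q X = 0}"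
    using factor \<open>a \<noteq> 0\<close> unfolding Q_def by auto
  have Q_iff: "Q X = 0 \<longleftrightarrow> discrim 1 p q \<ge> 0 \<and>
      (X = (- p + sqrt (discrim 1 p q)) / 2 \<or> X = (- p - sqrt (discrim 1 p q)) / 2)" for X
    using discriminant_iff[of 1 X p q] unfolding Q_def by simp
  have disc_discrim: "disc4 a b c d e = a^6 * (r1 - r2)^2 * discrim 1 p q * (Q r1 * Q r2)^2"
    unfolding disc discrim_def Q_def by simp
  have scale: "a^6 * (r1 - r2)^2 > 0"
    using assms(1,2) by simp
  show "card {X. quartic a b c d e X = 0} = 4" if "disc4 a b c d e > 0"
  proof -
    have "discrim 1 p q * (Q r1 * Q r2)^2 > 0"
      using that scale unfolding disc_discrim by (simp add: zero_less_mult_iff mult.assoc)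
    then have D: "discrim 1 p q > 0" and "Q r1 \<noteq> 0" "Q r2 \<noteq> 0"
      by (auto simp: zero_less_mult_iff)
    define t1 where "t1 = (- p + sqrt (discrim 1 p q)) / 2"
    define t2 where "t2 = (- p - sqrt (discrim 1 p q)) / 2"
    have "{X. Q X = 0} = {t1, t2}"
      using D unfolding Q_iff t1_def t2_def by auto
    moreover have "t1 \<noteq> t2"
      using D unfolding t1_def t2_def by simp
    moreover have "t1 \<notin> {r1, r2}" "t2 \<notin> {r1, r2}"
      using \<open>Q r1 \<noteq> 0\<close> \<open>Q r2 \<noteq> 0\<close> \<open>{X. Q X = 0} = {t1, t2}\<close> by auto
    ultimately show ?thesis
      unfolding roots using \<open>r1 \<noteq> r2\<close> by auto
  qed
  show "card {X. quartic a b c d e X = 0} = 2" if "disc4 a b c d e < 0"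
  proof -
    have "discrim 1 p q * (Q r1 * Q r2)^2 < 0"
      using that scale unfolding disc_discrim by (simp add: mult_less_0_iff mult.assoc)
    then have "discrim 1 p q < 0"
      by (auto simp: mult_less_0_iff)
    then have "{X. Q X = 0} = {}"
      unfolding Q_iff by auto
    then show ?thesis
      unfolding roots using \<open>r1 \<noteq> r2\<close> by simp
  qed
qed

lemma two_zeros_around_negative:
  fixes f :: "real \<Rightarrow> real"
  assumes "continuous_on {l..u} f" "f l \<ge> 0" "f u \<ge> 0" "l < x0" "x0 < u" "f x0 < 0"
  obtains r1 r2 where "r1 < r2" "f r1 = 0" "f r2 = 0"
proof -
  obtain r1 where "l \<le> r1" "r1 \<le> x0" "f r1 = 0"
    using IVT2'[of f x0 0 l] assms continuous_on_subset[OF assms(1)] by fastforce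
  moreover obtain r2 where "x0 \<le> r2" "r2 \<le> u" "f r2 = 0"
    using IVT'[of f x0 0 u] assms continuous_on_subset[OF assms(1)] by fastforce
  moreover have "r1 \<noteq> x0" "r2 \<noteq> x0"
    using \<open>f r1 = 0\<close> \<open>f r2 = 0\<close> \<open>f x0 < 0\<close> by auto
  ultimately have "r1 < r2"
    by auto
  then show thesis
    using that \<open>f r1 = 0\<close> \<open>f r2 = 0\<close> by blast
qed

lemma bij_betw_unit_circle:
  fixes \<theta> :: real
  shows "bij_betw (\<lambda>x. (cos (x - \<theta>), sin (x - \<theta>))) {0..<2*pi} {(X, Y). X^2 + Y^2 = 1}"
proof (rule bij_betwI')
  fix x y assume x: "x \<in> {0..<2*pi}" and y: "y \<in> {0..<2*pi}"
  show "((cos (x - \<theta>), sin (x - \<theta>)) = (cos (y - \<theta>), sin (y - \<theta>))) \<longleftrightarrow> x = y"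
  proof
    assume "(cos (x - \<theta>), sin (x - \<theta>)) = (cos (y - \<theta>), sin (y - \<theta>))"
    then obtain n :: int where n: "x - \<theta> = y - \<theta> + 2 * pi * n"
      using sin_cos_eq_iff by blast
    have "\<bar>x - y\<bar> < 2 * pi"
      using x y by (simp add: abs_less_iff)
    then have "2 * pi * \<bar>real_of_int n\<bar> < 2 * pi * 1"
      using n by (simp add: abs_mult)
    then have "n = 0"
      by simp
    then show "x = y" using n by simp
  qed simp
next
  fix x show "(cos (x - \<theta>), sin (x - \<theta>)) \<in> {(X, Y). X^2 + Y^2 = 1}" by simp
next
  fix P :: "real \<times> real" assume "P \<in> {(X, Y). X^2 + Y^2 = 1}"
  then obtain X Y where P: "P = (X, Y)" and "X^2 + Y^2 = 1"
    by auto
  then obtain t where t: "X = cos t" "Y = sin t"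
    using sincos_total_2pi by blast
  define x where "x = (t + \<theta>) - 2 * pi * \<lfloor>(t + \<theta>) / (2 * pi)\<rfloor>"
  have "of_int \<lfloor>(t + \<theta>) / (2 * pi)\<rfloor> * (2 * pi) \<le> t + \<theta>"
    "t + \<theta> < (of_int \<lfloor>(t + \<theta>) / (2 * pi)\<rfloor> + 1) * (2 * pi)"
    by (simp_all add: floor_divide_lower floor_divide_upper)
  then have "x \<in> {0..<2*pi}"
    unfolding x_def by (simp add: algebra_simps)
  moreover have "sin (x - \<theta>) = sin t \<and> cos (x - \<theta>) = cos t"
    unfolding sin_cos_eq_iff
    by (rule exI[of _ "- \<lfloor>(t + \<theta>) / (2 * pi)\<rfloor>"]) (simp add: x_def)
  ultimately show "\<exists>x\<in>{0..<2*pi}. P = (cos (x - \<theta>), sin (x - \<theta>))"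
    using P t by (intro bexI[of _ x]) auto
qed

lemma bij_betw_circle_graph:
  fixes b :: real and g :: "real \<Rightarrow> real"
  assumes "b \<noteq> 0"
  shows "bij_betw fst {(X, Y). X^2 + Y^2 = 1 \<and> b * Y = g X} {X. (g X)^2 = b^2 * (1 - X^2)}"
proof (rule bij_betwI')
  fix P Q :: "real \<times> real"
  assume "P \<in> {(X, Y). X^2 + Y^2 = 1 \<and> b * Y = g X}" "Q \<in> {(X, Y). X^2 + Y^2 = 1 \<and> b * Y = g X}"
  then obtain X Y X' Y' where PQ: "P = (X, Y)" "Q = (X', Y')" and "b * Y = g X" "b * Y' = g X'"
    by auto
  show "(fst P = fst Q) = (P = Q)"
  proof
    assume "fst P = fst Q"
    then have "b * Y = b * Y'"
      using PQ \<open>b * Y = g X\<close> \<open>b * Y' = g X'\<close> by simp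
    then show "P = Q"
      using PQ \<open>fst P = fst Q\<close> assms by simp
  qed simp
next
  fix P :: "real \<times> real" assume "P \<in> {(X, Y). X^2 + Y^2 = 1 \<and> b * Y = g X}"
  then obtain X Y where "P = (X, Y)" "X^2 + Y^2 = 1" "b * Y = g X"
    by auto
  then have "(g X)^2 = b^2 * (1 - X^2)"
    by (simp add: power_mult_distrib flip: \<open>b * Y = g X\<close>)
  then show "fst P \<in> {X. (g X)^2 = b^2 * (1 - X^2)}"
    using \<open>P = (X, Y)\<close> by simp
next
  fix X assume "X \<in> {X. (g X)^2 = b^2 * (1 - X^2)}"
  then have "(g X / b)^2 = 1 - X^2"
    using assms by (simp add: power_divide)
  then have "X^2 + (g X / b)^2 = 1"
    by simp
  moreover have "b * (g X / b) = g X"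
    using assms by simp
  ultimately show "\<exists>P\<in>{(X, Y). X^2 + Y^2 = 1 \<and> b * Y = g X}. X = fst P"
    by (intro bexI[of _ "(X, g X / b)"]) auto
qed

lemma card_circle_equation:
  fixes b \<theta> :: real and g :: "real \<Rightarrow> real"
  assumes "b \<noteq> 0"
  shows "card {x\<in>{0..<2*pi}. b * sin (x - \<theta>) = g (cos (x - \<theta>))}
       = card {X. (g X)^2 = b^2 * (1 - X^2)}"
proof -
  let ?f = "\<lambda>x. (cos (x - \<theta>), sin (x - \<theta>))"
  define S where "S = {x\<in>{0..<2*pi}. b * sin (x - \<theta>) = g (cos (x - \<theta>))}"
  have "?f ` S = {P \<in> ?f ` {0..<2*pi}. b * snd P = g (fst P)}"
    unfolding S_def by auto
  also have "\<dots> = {(X, Y). X^2 + Y^2 = 1 \<and> b * Y = g X}"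
    unfolding bij_betw_imp_surj_on[OF bij_betw_unit_circle] by auto
  finally have "bij_betw ?f S {(X, Y). X^2 + Y^2 = 1 \<and> b * Y = g X}"
    by (intro bij_betw_subset[OF bij_betw_unit_circle]) (auto simp: S_def)
  then have "bij_betw (fst \<circ> ?f) S {X. (g X)^2 = b^2 * (1 - X^2)}"
    using bij_betw_circle_graph[OF assms] by (rule bij_betw_trans)
  then show ?thesis
    unfolding S_def by (rule bij_betw_same_card)
qed

definition PP_quartic :: "real \<Rightarrow> real \<Rightarrow> real \<Rightarrow> real \<Rightarrow> real" where
  "PP_quartic a b d X = (d * (2 * X^2 - 1) - a * X)^2 - b^2 * (1 - X^2)"

lemma PP_quartic_eq_quartic:
  assumes "a^2 + b^2 = 1"
  shows "PP_quartic a b d X = quartic (4*d^2) (-4*a*d) (1 - 4*d^2) (2*a*d) (d^2 - b^2) X"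
  using assms unfolding PP_quartic_def quartic_def by algebra

lemma disc4_PP_quartic:
  assumes "a^2 + b^2 = 1"
  shows "disc4 (4*d^2) (-4*a*d) (1 - 4*d^2) (2*a*d) (d^2 - b^2)
       = 64 * d^2 * b^4 * ((4*d^2 - 1)^3 - 27 * d^2 * (2*b^2 - 1)^2)"
proof -
  have "a^2 = 1 - b^2" using assms by simp
  then show ?thesis unfolding disc4_def by algebra
qed

lemma PP_quartic_two_roots:
  fixes a b d :: real
  assumes "b > 0"
  obtains r1 r2 where "r1 < r2" "PP_quartic a b d r1 = 0" "PP_quartic a b d r2 = 0"
proof -
  define k where "k = sqrt 2 / 2"
  have "k^2 = 1/2" "0 < k" "k < 1"
    unfolding k_def by (simp_all add: power_divide sqrt2_less_2)
  \<comment> \<open>at a zero of h in (-1, 1) the quartic equals -b^2 (1 - X^2) < 0\<close>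
  define h where "h X = d * (2 * X^2 - 1) - a * X" for X
  have "h k = - (a * k)" "h (-k) = a * k"
    unfolding h_def using \<open>k^2 = 1/2\<close> by auto
  moreover have "continuous_on {-k..k} h"
    unfolding h_def by (intro continuous_intros)
  ultimately obtain x0 where x0: "-k \<le> x0" "x0 \<le> k" "h x0 = 0"
    using IVT'[of h "-k" 0 k] IVT2'[of h k 0 "-k"] \<open>0 < k\<close>
    by (cases "a \<ge> 0") (auto simp: mult_nonneg_nonneg mult_nonpos_nonneg)
  have "x0^2 < 1"
    using x0 \<open>k < 1\<close> by (simp add: abs_square_less_1)
  then have "PP_quartic a b d x0 < 0"
    using x0(3) \<open>b > 0\<close> unfolding PP_quartic_def h_def by simp
  moreover have "continuous_on {-1..1} (PP_quartic a b d)"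
    unfolding PP_quartic_def by (intro continuous_intros)
  moreover have "PP_quartic a b d (-1) \<ge> 0" "PP_quartic a b d 1 \<ge> 0"
    unfolding PP_quartic_def by simp_all
  moreover have "-1 < x0" "x0 < 1"
    using x0 \<open>k < 1\<close> by auto
  ultimately show thesis
    using two_zeros_around_negative that by blast
qed

lemma card_PP_quartic_roots:
  fixes a b d :: real
  assumes "a^2 + b^2 = 1" "b > 0"
  defines "G \<equiv> (4*d^2 - 1)^3 - 27 * d^2 * (2*b^2 - 1)^2"
  shows "G > 0 \<Longrightarrow> card {X. PP_quartic a b d X = 0} = 4"
    and "G < 0 \<Longrightarrow> card {X. PP_quartic a b d X = 0} = 2"
proof -
  obtain r1 r2 where "r1 < r2" "PP_quartic a b d r1 = 0" "PP_quartic a b d r2 = 0"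
    using PP_quartic_two_roots[OF \<open>b > 0\<close>] by blast
  note as_quartic = PP_quartic_eq_quartic[OF assms(1)]
  have disc: "disc4 (4*d^2) (-4*a*d) (1 - 4*d^2) (2*a*d) (d^2 - b^2) = 64 * d^2 * b^4 * G"
    unfolding G_def by (rule disc4_PP_quartic[OF assms(1)])
  have count: "disc4 (4*d^2) (-4*a*d) (1 - 4*d^2) (2*a*d) (d^2 - b^2) > 0
        \<Longrightarrow> card {X. PP_quartic a b d X = 0} = 4"
    "disc4 (4*d^2) (-4*a*d) (1 - 4*d^2) (2*a*d) (d^2 - b^2) < 0
        \<Longrightarrow> card {X. PP_quartic a b d X = 0} = 2"
    if "d \<noteq> 0"
    using card_quartic_roots_by_disc[of "4*d^2" r1 r2] that \<open>r1 < r2\<close>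
      \<open>PP_quartic a b d r1 = 0\<close> \<open>PP_quartic a b d r2 = 0\<close> unfolding as_quartic by auto
  show "card {X. PP_quartic a b d X = 0} = 4" if "G > 0"
  proof -
    have "d \<noteq> 0"
      using that unfolding G_def by auto
    then show ?thesis
      using count(1) that \<open>b > 0\<close> unfolding disc by simp
  qed
  show "card {X. PP_quartic a b d X = 0} = 2" if "G < 0"
  proof (cases "d = 0")
    case True
    then have "PP_quartic a b d X = X^2 - b^2" for X
      using assms(1) unfolding PP_quartic_def by algebra
    then have "{X. PP_quartic a b d X = 0} = {b, -b}"
      by (auto simp: power2_eq_iff)
    then show ?thesis
      using \<open>b > 0\<close> by simp
  next
    case False
    then show ?thesis
      using count(2) that \<open>b > 0\<close> unfolding disc by (simp add: mult_pos_neg)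
  qed
qed

lemma PP_rotated:
  fixes x d v :: real
  defines "\<theta> \<equiv> pi/4 - v/2"
  shows "PP x d v = d * (2 * cos (x - \<theta>)^2 - 1) - sin \<theta> * cos (x - \<theta>) - cos \<theta> * sin (x - \<theta>)"
proof -
  have shift: "2 * x + v = 2 * (x - \<theta>) + pi/2"
    unfolding \<theta>_def by (simp add: field_simps)
  have "sin (2 * x + v) = cos (2 * (x - \<theta>))"
    unfolding shift by (simp add: sin_add)
  also have "\<dots> = 2 * cos (x - \<theta>)^2 - 1"
    by (rule cos_double_cos)
  finally have "sin (2 * x + v) = 2 * cos (x - \<theta>)^2 - 1" .
  moreover have "sin x = sin \<theta> * cos (x - \<theta>) + cos \<theta> * sin (x - \<theta>)"
    using sin_add[of "x - \<theta>" \<theta>] by (simp add: mult.commute)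
  ultimately show ?thesis
    unfolding PP_def by simp
qed

lemma card_PP_roots:
  fixes d v :: real
  assumes "0 \<le> v" "v < pi"
  shows "gam d v > 0 \<Longrightarrow> card {x\<in>{0..<2*pi}. PP x d v = 0} = 4"
    and "gam d v < 0 \<Longrightarrow> card {x\<in>{0..<2*pi}. PP x d v = 0} = 2"
proof -
  define \<theta> where "\<theta> = pi/4 - v/2"
  define g where "g X = d * (2 * X^2 - 1) - sin \<theta> * X" for X
  have "cos \<theta> > 0"
    unfolding \<theta>_def using assms by (intro cos_gt_zero_pi) auto
  have "sin v = cos (2 * \<theta>)"
    unfolding \<theta>_def by (simp add: right_diff_distrib cos_diff)
  then have gam: "gam d v = (4*d^2 - 1)^3 - 27 * d^2 * (2 * cos \<theta>^2 - 1)^2"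
    unfolding gam_def by (simp add: cos_double_cos)
  have "{x\<in>{0..<2*pi}. PP x d v = 0} = {x\<in>{0..<2*pi}. cos \<theta> * sin (x - \<theta>) = g (cos (x - \<theta>))}"
    unfolding PP_rotated[of x d v for x] \<theta>_def[symmetric] g_def by (auto simp: algebra_simps)
  also have "card \<dots> = card {X. (g X)^2 = (cos \<theta>)^2 * (1 - X^2)}"
    using \<open>cos \<theta> > 0\<close> by (intro card_circle_equation) simp
  also have "{X. (g X)^2 = (cos \<theta>)^2 * (1 - X^2)} = {X. PP_quartic (sin \<theta>) (cos \<theta>) d X = 0}"
    unfolding PP_quartic_def g_def by simp
  finally have card_eq:
    "card {x\<in>{0..<2*pi}. PP x d v = 0} = card {X. PP_quartic (sin \<theta>) (cos \<theta>) d X = 0}" .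
  show "gam d v > 0 \<Longrightarrow> card {x\<in>{0..<2*pi}. PP x d v = 0} = 4"
    and "gam d v < 0 \<Longrightarrow> card {x\<in>{0..<2*pi}. PP x d v = 0} = 2"
    unfolding card_eq gam using card_PP_quartic_roots[OF sin_cos_squared_add \<open>cos \<theta> > 0\<close>] by auto
qed

lemma deriv_PP: "deriv (\<lambda>x. PP x d v) = (\<lambda>x. 2 * d * cos (2 * x + v) - cos x)"
proof (rule ext, rule DERIV_imp_deriv)
  show "((\<lambda>x. PP x d v) has_real_derivative 2 * d * cos (2 * x + v) - cos x) (at x)" for x
    unfolding PP_def by (auto intro!: derivative_eq_intros)
qed

lemma deriv_PP_deriv:
  fixes d v :: real
  shows "deriv (\<lambda>x. 2 * d * cos (2 * x + v) - cos x) = (\<lambda>x. - 4 * d * sin (2 * x + v) + sin x)"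
proof (rule ext, rule DERIV_imp_deriv)
  show "((\<lambda>x. 2 * d * cos (2 * x + v) - cos x)
      has_real_derivative - 4 * d * sin (2 * x + v) + sin x) (at x)" for x
    by (auto intro!: derivative_eq_intros)
qed

lemma deriv_PP_deriv2:
  fixes d v :: real
  shows "deriv (\<lambda>x. - 4 * d * sin (2 * x + v) + sin x) = (\<lambda>x. - 8 * d * cos (2 * x + v) + cos x)"
proof (rule ext, rule DERIV_imp_deriv)
  show "((\<lambda>x. - 4 * d * sin (2 * x + v) + sin x)
      has_real_derivative - 8 * d * cos (2 * x + v) + cos x) (at x)" for x
    by (auto intro!: derivative_eq_intros)
qed

lemma PPd_1: "PPd 1 x d v = 2 * d * cos (2 * x + v) - cos x"
  unfolding PPd_def by (simp add: deriv_PP)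

lemma PPd_2: "PPd 2 x d v = - 4 * d * sin (2 * x + v) + sin x"
  unfolding PPd_def numeral_2_eq_2
  by (simp only: funpow.simps comp_apply id_apply deriv_PP deriv_PP_deriv)

lemma PPd_3: "PPd 3 x d v = - 8 * d * cos (2 * x + v) + cos x"
  unfolding PPd_def numeral_3_eq_3
  by (simp only: funpow.simps comp_apply id_apply deriv_PP deriv_PP_deriv deriv_PP_deriv2)

lemma PP_double_root_gam:
  fixes x d v :: real
  assumes "PP x d v = 0" "PPd 1 x d v = 0"
  shows "gam d v = 0" and "d \<noteq> 0"
proof -
  define S where "S = sin (2 * x + v)"
  define C where "C = cos (2 * x + v)"
  have S: "d * S = sin x" and C: "2 * d * C = cos x"
    using assms unfolding PP_def PPd_1 S_def C_def by simp_all
  have "sin v = sin ((2 * x + v) - 2 * x)"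
    by simp
  also have "\<dots> = S * (1 - 2 * sin x^2) - C * (2 * sin x * cos x)"
    unfolding sin_diff cos_double_sin sin_double S_def C_def by (simp add: mult.assoc)
  finally have sin_v: "sin v = S * (1 - 2 * sin x^2) - C * (2 * sin x * cos x)" .
  \<comment> \<open>eliminate the phase 2x + v using S^2 + C^2 = 1 and sin^2 x + cos^2 x = 1\<close>
  have "4 * d^2 - 1 = 3 * sin x^2"
  proof -
    have "4 * (d * S)^2 + (2 * d * C)^2 = 4 * d^2 * (S^2 + C^2)"
      by algebra
    then have "4 * d^2 = 4 * (d * S)^2 + (2 * d * C)^2"
      unfolding S_def C_def by simp
    then show ?thesis
      unfolding S C using sin_cos_squared_add[of x] by linarith
  qed
  moreover have "d * sin v = - (sin x^3)"
  proof -
    have "d * sin v = (d * S) * (1 - 2 * sin x^2) - (2 * d * C) * (sin x * cos x)"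
      unfolding sin_v by algebra
    also have "\<dots> = sin x * (1 - sin x^2 - (sin x^2 + cos x^2))"
      unfolding S C by algebra
    finally show ?thesis
      by (simp add: power3_eq_cube power2_eq_square algebra_simps)
  qed
  ultimately show "gam d v = 0"
    unfolding gam_def by algebra
  show "d \<noteq> 0"
  proof
    assume "d = 0"
    then have "sin x = 0" "cos x = 0"
      using S C by simp_all
    then show False
      using sin_cos_squared_add[of x] by simp
  qed
qed

lemma PP_triple_root:
  fixes x d v :: real
  assumes "0 \<le> v" "v < pi" "PP x d v = 0" "PPd 1 x d v = 0" "PPd 2 x d v = 0"
  shows "v = 0" and "sin x = 0" and "PPd 3 x d v = - 3 * cos x" and "cos x \<noteq> 0"
proof -
  have S: "d * sin (2 * x + v) = sin x" and C: "2 * d * cos (2 * x + v) = cos x"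
    and S4: "4 * d * sin (2 * x + v) = sin x"
    using assms(3-5) unfolding PP_def PPd_1 PPd_2 by simp_all
  show "sin x = 0"
    using S S4 by (simp add: mult.assoc)
  then show "cos x \<noteq> 0"
    using sin_cos_squared_add[of x] by auto
  then have "d \<noteq> 0" "sin (2 * x + v) = 0"
    using S C \<open>sin x = 0\<close> by auto
  then have "sin v = 0"
    using sin_add[of "2 * x" v] \<open>sin x = 0\<close> by (simp add: sin_double cos_double_sin)
  then show "v = 0"
    using assms(1,2) sin_gt_zero[of v] by fastforce
  show "PPd 3 x d v = - 3 * cos x"
    unfolding PPd_3 using C by (simp add: mult.assoc)
qed

theorem mainTheorem1:
  fixes \<delta> \<nu> :: real
  assumes "0 \<le> \<nu>" and "\<nu> < pi"
  shows "((\<delta>, \<nu>) \<in> Omega_plus \<longrightarrow> card {\<sigma>\<in>{0..<2*pi}. PP \<sigma> \<delta> \<nu> = 0} = 4)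
    \<and> ((\<delta>, \<nu>) \<in> Omega_minus \<longrightarrow> card {\<sigma>\<in>{0..<2*pi}. PP \<sigma> \<delta> \<nu> = 0} = 2)
    \<and> ((\<delta>, \<nu>) \<notin> gamma_plus \<union> gamma_minus \<longrightarrow>
         (\<forall>\<sigma>\<in>{0..<2*pi}. PP \<sigma> \<delta> \<nu> = 0 \<longrightarrow> PPd 1 \<sigma> \<delta> \<nu> \<noteq> 0))
    \<and> (\<forall>\<sigma>\<in>{0..<2*pi}. PP \<sigma> \<delta> \<nu> = 0 \<and> PPd 1 \<sigma> \<delta> \<nu> = 0 \<and> PPd 2 \<sigma> \<delta> \<nu> = 0 \<longrightarrow>
         \<nu> = 0 \<and> sin \<sigma> = 0 \<and> PPd 3 \<sigma> \<delta> \<nu> = - 3 * cos \<sigma> \<and> - 3 * cos \<sigma> \<noteq> 0)"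
proof -
  have four_roots: "card {\<sigma>\<in>{0..<2*pi}. PP \<sigma> \<delta> \<nu> = 0} = 4" if "(\<delta>, \<nu>) \<in> Omega_plus"
    using that card_PP_roots(1)[OF assms] unfolding Omega_plus_def by simp
  have two_roots: "card {\<sigma>\<in>{0..<2*pi}. PP \<sigma> \<delta> \<nu> = 0} = 2" if "(\<delta>, \<nu>) \<in> Omega_minus"
    using that card_PP_roots(2)[OF assms] unfolding Omega_minus_def by simp
  have simple_root: "PPd 1 \<sigma> \<delta> \<nu> \<noteq> 0"
    if "(\<delta>, \<nu>) \<notin> gamma_plus \<union> gamma_minus" and "PP \<sigma> \<delta> \<nu> = 0" for \<sigma>
  proof
    assume "PPd 1 \<sigma> \<delta> \<nu> = 0"
    then have "gam \<delta> \<nu> = 0" "\<delta> < 0 \<or> \<delta> > 0"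
      using PP_double_root_gam \<open>PP \<sigma> \<delta> \<nu> = 0\<close> by (auto simp: neq_iff)
    then show False
      using that(1) assms unfolding gamma_plus_def gamma_minus_def by auto
  qed
  have triple_root: "\<nu> = 0 \<and> sin \<sigma> = 0 \<and> PPd 3 \<sigma> \<delta> \<nu> = - 3 * cos \<sigma> \<and> - 3 * cos \<sigma> \<noteq> 0"
    if "PP \<sigma> \<delta> \<nu> = 0 \<and> PPd 1 \<sigma> \<delta> \<nu> = 0 \<and> PPd 2 \<sigma> \<delta> \<nu> = 0" for \<sigma>
    using that PP_triple_root[OF assms, of \<sigma> \<delta>] by simp
  show ?thesis
    using four_roots two_roots simple_root triple_root by blast
qed

end
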